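(* HazardPointersPOP, as described in the context, is safe from use-after-free errors: no node freed by a reclaiming thread is subsequently accessed by any thread.
   Context: Setting: an asynchronous shared-memory system with a fixed set of threads operating on a linked concurrent data structure; each unlinked node is retired by exactly one thread. HazardPointersPOP: each thread has a private array of local reservation slots (at most MAX_HP per thread), a row of a shared single-writer multi-reader array sharedReservations, a shared monotonically increasing counter publishCounter, and a private retire list. To access a node a thread calls read(ptrAddr, slot), which repeatedly loads the pointer stored at ptrAddr, writes it into its local reservation slot (no memory fence, not published), and re-loads ptrAddr, until the two loads agree, then returns the pointer; threads only dereference nodes obtained through read and still held in a local slot. At the end of an operation local slots are set to NULL. Data structures are assumed to be used as with hazard pointers: if read returns a pointer to a node, that node was not yet retired at the time of the validating re-load. On retire a thread appends the node to its retire list; when the list reaches a threshold it (1) records all threads' publishCounter values, (2) sends a POSIX signal to every other thread, whose handler copies that thread's local reservations into its shared reservation slots and then increments its publishCounter, (3) waits until every other thread's publishCounter exceeds the recorded value, and (4) collects all shared reservations and frees every node of its retire list not among them. Assumption: after being signalled, a thread publishes its reservations (completes its handler) within bounded time. *)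

theory Defs
  imports Main
begin

text \<open>
  Abstract interleaving (sequentially consistent) model of HazardPointersPOP.
  Type parameters: 't threads (a fixed finite set), 'n nodes, 'a shared memory
  locations holding node pointers (None = NULL).
  Parameters of the model: maxhp (number of local reservation slots per thread,
  slots are 0 ..< maxhp) and thr (retire-list threshold).
\<close>

datatype ('t, 'n) phase =
    Idle
  | Recording "'t set"                    \<comment> \<open>step (1): counters still to record\<close>
  | Signalling "'t set"                   \<comment> \<open>step (2): threads still to signal\<close>
  | Waiting "'t set"                      \<comment> \<open>step (3): threads still to wait for\<close>
  | Collecting "('t \<times> nat) set" "'n set"  \<comment> \<open>step (4): shared slots still to read, collected nodes\<close>

record ('t, 'n, 'a) hpstate =
  mem      :: "'a \<Rightarrow> 'n option"              \<comment> \<open>shared pointer locations of the data structure\<close>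
  lres     :: "'t \<Rightarrow> nat \<Rightarrow> 'n option"        \<comment> \<open>private local reservation slots\<close>
  pend     :: "'t \<Rightarrow> nat \<Rightarrow> 'a option"        \<comment> \<open>read in progress on slot: address loaded from\<close>
  valid    :: "'t \<Rightarrow> nat \<Rightarrow> bool"             \<comment> \<open>slot holds a pointer returned by read\<close>
  sres     :: "'t \<Rightarrow> nat \<Rightarrow> 'n option"        \<comment> \<open>sharedReservations (row per thread)\<close>
  pcnt     :: "'t \<Rightarrow> nat"                    \<comment> \<open>publishCounter\<close>
  snap     :: "'t \<Rightarrow> 't \<Rightarrow> nat"              \<comment> \<open>counters recorded by a reclaimer\<close>
  rlist    :: "'t \<Rightarrow> 'n set"                 \<comment> \<open>private retire lists\<close>
  retired  :: "'n set"
  freed    :: "'n set"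
  phase    :: "'t \<Rightarrow> ('t, 'n) phase"
  sigpend  :: "'t \<Rightarrow> bool"
  hpos     :: "'t \<Rightarrow> nat option"             \<comment> \<open>signal handler running: next slot to copy\<close>

datatype ('t, 'n, 'a) act =
    Load 't 'a nat          \<comment> \<open>read: load ptrAddr and write it into the local slot\<close>
  | Validate 't nat         \<comment> \<open>read: validating re-load agrees, read returns\<close>
  | Access 't 'n            \<comment> \<open>dereference of a node\<close>
  | Store 't 'a "'n option" \<comment> \<open>data-structure write to shared memory\<close>
  | Retire 't 'n
  | Clear 't                \<comment> \<open>end of operation: local slots set to NULL\<close>
  | RecordPC 't 't
  | RecDone 't
  | SendSig 't 't
  | SigDone 't
  | WaitFor 't 't
  | WaitDone 't
  | CollectRes 't 't nat
  | Free 't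
  | HStart 't               \<comment> \<open>signal handler starts\<close>
  | HCopy 't                \<comment> \<open>handler copies one local slot to the shared row\<close>
  | HEnd 't                 \<comment> \<open>handler increments publishCounter\<close>

definition hp_init :: "('t, 'n, 'a) hpstate \<Rightarrow> bool" where
  "hp_init s \<longleftrightarrow>
     lres s = (\<lambda>_ _. None) \<and> pend s = (\<lambda>_ _. None) \<and> valid s = (\<lambda>_ _. False) \<and>
     sres s = (\<lambda>_ _. None) \<and> pcnt s = (\<lambda>_. 0) \<and> rlist s = (\<lambda>_. {}) \<and>
     retired s = {} \<and> freed s = {} \<and> phase s = (\<lambda>_. Idle) \<and>
     sigpend s = (\<lambda>_. False) \<and> hpos s = (\<lambda>_. None)"

text \<open>A thread executes its own (non-handler) code only when its handler is not running.\<close>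
definition running :: "('t, 'n, 'a) hpstate \<Rightarrow> 't \<Rightarrow> bool" where
  "running s t \<longleftrightarrow> hpos s t = None"

definition in_op :: "('t, 'n, 'a) hpstate \<Rightarrow> 't \<Rightarrow> bool" where
  "in_op s t \<longleftrightarrow> hpos s t = None \<and> phase s t = Idle"

inductive hp_step :: "nat \<Rightarrow> nat \<Rightarrow> ('t::finite, 'n, 'a) hpstate \<Rightarrow> ('t, 'n, 'a) act
                      \<Rightarrow> ('t, 'n, 'a) hpstate \<Rightarrow> bool"
  for maxhp :: nat and thr :: nat where
  load: "\<lbrakk> in_op s t; i < maxhp \<rbrakk> \<Longrightarrow>
     hp_step maxhp thr s (Load t a i)
       (s\<lparr> lres := (lres s)(t := (lres s t)(i := mem s a)),
           pend := (pend s)(t := (pend s t)(i := Some a)),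
           valid := (valid s)(t := (valid s t)(i := False)) \<rparr>)"
| validate: "\<lbrakk> in_op s t; i < maxhp; pend s t i = Some a; mem s a = lres s t i;
               \<comment> \<open>hazard-pointer usage assumption of the data structure\<close>
               \<forall>n. lres s t i = Some n \<longrightarrow> n \<notin> retired s \<rbrakk> \<Longrightarrow>
     hp_step maxhp thr s (Validate t i)
       (s\<lparr> pend := (pend s)(t := (pend s t)(i := None)),
           valid := (valid s)(t := (valid s t)(i := True)) \<rparr>)"
| access: "\<lbrakk> in_op s t; i < maxhp; valid s t i; lres s t i = Some n \<rbrakk> \<Longrightarrow>
     hp_step maxhp thr s (Access t n) s"
| store: "in_op s t \<Longrightarrow> hp_step maxhp thr s (Store t a v) (s\<lparr> mem := (mem s)(a := v) \<rparr>)"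
| clear: "in_op s t \<Longrightarrow>
     hp_step maxhp thr s (Clear t)
       (s\<lparr> lres := (lres s)(t := (\<lambda>_. None)), pend := (pend s)(t := (\<lambda>_. None)),
           valid := (valid s)(t := (\<lambda>_. False)) \<rparr>)"
| retire: "\<lbrakk> in_op s t; n \<notin> retired s \<rbrakk> \<Longrightarrow>
     hp_step maxhp thr s (Retire t n)
       (if card (insert n (rlist s t)) \<ge> thr then
          s\<lparr> retired := insert n (retired s), rlist := (rlist s)(t := insert n (rlist s t)),
             sres := (sres s)(t := lres s t),
             phase := (phase s)(t := Recording (UNIV - {t})) \<rparr>
        else
          s\<lparr> retired := insert n (retired s), rlist := (rlist s)(t := insert n (rlist s t)) \<rparr>)"
| record_pc: "\<lbrakk> running s t; phase s t = Recording S; u \<in> S \<rbrakk> \<Longrightarrow>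
     hp_step maxhp thr s (RecordPC t u)
       (s\<lparr> snap := (snap s)(t := (snap s t)(u := pcnt s u)),
           phase := (phase s)(t := Recording (S - {u})) \<rparr>)"
| rec_done: "\<lbrakk> running s t; phase s t = Recording {} \<rbrakk> \<Longrightarrow>
     hp_step maxhp thr s (RecDone t) (s\<lparr> phase := (phase s)(t := Signalling (UNIV - {t})) \<rparr>)"
| send_sig: "\<lbrakk> running s t; phase s t = Signalling S; u \<in> S \<rbrakk> \<Longrightarrow>
     hp_step maxhp thr s (SendSig t u)
       (s\<lparr> sigpend := (sigpend s)(u := True), phase := (phase s)(t := Signalling (S - {u})) \<rparr>)"
| sig_done: "\<lbrakk> running s t; phase s t = Signalling {} \<rbrakk> \<Longrightarrow>
     hp_step maxhp thr s (SigDone t) (s\<lparr> phase := (phase s)(t := Waiting (UNIV - {t})) \<rparr>)"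
| wait_for: "\<lbrakk> running s t; phase s t = Waiting S; u \<in> S; pcnt s u > snap s t u \<rbrakk> \<Longrightarrow>
     hp_step maxhp thr s (WaitFor t u) (s\<lparr> phase := (phase s)(t := Waiting (S - {u})) \<rparr>)"
| wait_done: "\<lbrakk> running s t; phase s t = Waiting {} \<rbrakk> \<Longrightarrow>
     hp_step maxhp thr s (WaitDone t)
       (s\<lparr> phase := (phase s)(t := Collecting {(u, i). i < maxhp} {}) \<rparr>)"
| collect: "\<lbrakk> running s t; phase s t = Collecting P Q; (u, i) \<in> P \<rbrakk> \<Longrightarrow>
     hp_step maxhp thr s (CollectRes t u i)
       (s\<lparr> phase := (phase s)(t := Collecting (P - {(u, i)}) (Q \<union> set_option (sres s u i))) \<rparr>)"
| free: "\<lbrakk> running s t; phase s t = Collecting {} Q \<rbrakk> \<Longrightarrow>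
     hp_step maxhp thr s (Free t)
       (s\<lparr> freed := freed s \<union> (rlist s t - Q), rlist := (rlist s)(t := rlist s t \<inter> Q),
           phase := (phase s)(t := Idle) \<rparr>)"
| h_start: "\<lbrakk> sigpend s t; hpos s t = None \<rbrakk> \<Longrightarrow>
     hp_step maxhp thr s (HStart t)
       (s\<lparr> sigpend := (sigpend s)(t := False), hpos := (hpos s)(t := Some 0) \<rparr>)"
| h_copy: "\<lbrakk> hpos s t = Some i; i < maxhp \<rbrakk> \<Longrightarrow>
     hp_step maxhp thr s (HCopy t)
       (s\<lparr> sres := (sres s)(t := (sres s t)(i := lres s t i)), hpos := (hpos s)(t := Some (Suc i)) \<rparr>)"
| h_end: "\<lbrakk> hpos s t = Some i; i \<ge> maxhp \<rbrakk> \<Longrightarrow>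
     hp_step maxhp thr s (HEnd t)
       (s\<lparr> pcnt := (pcnt s)(t := Suc (pcnt s t)), hpos := (hpos s)(t := None) \<rparr>)"

inductive hp_reach :: "nat \<Rightarrow> nat \<Rightarrow> ('t::finite, 'n, 'a) hpstate \<Rightarrow> bool"
  for maxhp :: nat and thr :: nat where
  init: "hp_init s \<Longrightarrow> hp_reach maxhp thr s"
| step: "\<lbrakk> hp_reach maxhp thr s; hp_step maxhp thr s e s' \<rbrakk> \<Longrightarrow> hp_reach maxhp thr s'"

end

theory Submission
  imports Defs
begin

text \<open>
  Validation refuses retired nodes, so a validated reservation of a node n in the retire list
  of a reclaimer r was validated before n was retired, hence before r recorded the
  publishCounter of the reserving thread u. A validated slot cannot change without being
  invalidated, and r waits until u's counter exceeds the recorded value, i.e. until u has run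
  a complete signal handler after the recording; that handler copied the slot, still holding n,
  into sharedReservations. So r collects n and does not free it. (A handler that was already
  running when the counter was recorded is harmless: it only copies slots.)
\<close>

abbreviation protects :: "('t, 'n, 'a) hpstate \<Rightarrow> 't \<Rightarrow> nat \<Rightarrow> 'n \<Rightarrow> bool" where
  "protects s u i n \<equiv> valid s u i \<and> lres s u i = Some n"

fun counter_recorded :: "('t, 'n) phase \<Rightarrow> 't \<Rightarrow> bool" where
  "counter_recorded (Recording S) u \<longleftrightarrow> u \<notin> S"
| "counter_recorded _ u \<longleftrightarrow> True"

fun counter_awaited :: "('t, 'n) phase \<Rightarrow> 't \<Rightarrow> bool" where
  "counter_awaited (Waiting S) u \<longleftrightarrow> u \<notin> S"
| "counter_awaited (Collecting P Q) u \<longleftrightarrow> True"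
| "counter_awaited _ u \<longleftrightarrow> False"

lemma reach_valid_slot_bound:
  assumes "hp_reach maxhp thr s" and "valid s u i"
  shows "i < maxhp"
  using assms
  by (induction arbitrary: u i rule: hp_reach.induct)
     (auto simp: hp_init_def elim!: hp_step.cases split: if_splits)

lemma reach_rlist_retired:
  assumes "hp_reach maxhp thr s"
  shows "rlist s r \<subseteq> retired s"
  using assms
  by (induction arbitrary: r rule: hp_reach.induct)
     (fastforce simp: hp_init_def elim!: hp_step.cases split: if_splits)+

corollary reach_not_retired_not_listed:
  assumes "hp_reach maxhp thr s" and "n \<notin> retired s"
  shows "n \<notin> rlist s r"
  using reach_rlist_retired[OF assms(1)] assms(2) by blast

lemma reach_freed_retired:
  assumes "hp_reach maxhp thr s"
  shows "freed s \<subseteq> retired s"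
  using assms
  by (induction rule: hp_reach.induct)
     (auto simp: hp_init_def elim!: hp_step.cases split: if_splits
           intro: reach_rlist_retired[THEN subsetD])

lemma reach_awaited_counter_advanced:
  assumes "hp_reach maxhp thr s" and "counter_awaited (phase s r) u" and "u \<noteq> r"
  shows "snap s r u < pcnt s u"
  using assms
  by (induction arbitrary: r u rule: hp_reach.induct)
     (fastforce simp: hp_init_def running_def in_op_def elim!: hp_step.cases split: if_splits)+

lemma reach_handler_copied:
  assumes "hp_reach maxhp thr s" and "hpos s u = Some k" and "i < k" and "protects s u i n"
  shows "sres s u i = Some n"
  using assms
  by (induction arbitrary: u k i n rule: hp_reach.induct)
     (auto simp: hp_init_def in_op_def elim!: hp_step.cases split: if_splits)

lemma reach_own_published:
  assumes "hp_reach maxhp thr s" and "phase s r \<noteq> Idle" and "n \<in> rlist s r"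
    and "protects s r i n"
  shows "sres s r i = Some n"
  using assms
  by (induction arbitrary: r i n rule: hp_reach.induct)
     (auto simp: hp_init_def in_op_def running_def elim!: hp_step.cases split: if_splits)

lemma reach_published_since_snapshot:
  assumes "hp_reach maxhp thr s" and "phase s r \<noteq> Idle" and "u \<noteq> r"
    and "n \<in> rlist s r" and "protects s u i n"
    and "counter_recorded (phase s r) u" and "snap s r u < pcnt s u"
  shows "sres s u i = Some n"
  using assms
proof (induction arbitrary: r u i n rule: hp_reach.induct)
  case (init s)
  then show ?case by (simp add: hp_init_def)
next
  case (step s e s')
  from step.hyps(2) show ?case
  proof cases
    case (h_end t k)
    \<comment> \<open>the handler run that lifts u's counter above the snapshot
      has copied every slot\<close>
    show ?thesis
    proof (cases "t = u")
      case True
      have "valid s u i" and "lres s u i = Some n"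
        using h_end step.prems by simp_all
      moreover have "i < k"
        using reach_valid_slot_bound[OF step.hyps(1) \<open>valid s u i\<close>] h_end by simp
      ultimately show ?thesis
        using reach_handler_copied[OF step.hyps(1)] h_end True by simp
    next
      case False
      then have "sres s u i = Some n"
        using step.IH[of r u n i] h_end step.prems by simp
      with h_end show ?thesis by simp
    qed
  next
    case (record_pc t S v)
    \<comment> \<open>a counter recorded in this step equals the snapshot,
      so the claim is vacuous for it\<close>
    have "\<not> (r = t \<and> u = v)"
      using record_pc step.prems(6) by auto
    then have "phase s r \<noteq> Idle \<and> counter_recorded (phase s r) u
        \<and> snap s r u < pcnt s u"
      using record_pc step.prems(1,5,6) by (cases "r = t") auto
    with step.IH[of r u n i] step.prems(2-4) record_pc show ?thesis by simp
  qed (use step.prems step.IH[of r u n i] reach_not_retired_not_listed[OF step.hyps(1)]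
        in \<open>auto simp: in_op_def running_def split: if_splits\<close>)
qed

lemma reach_collecting_published:
  assumes "hp_reach maxhp thr s" and "phase s r = Collecting P Q"
    and "n \<in> rlist s r" and "protects s u i n"
  shows "sres s u i = Some n"
proof (cases "u = r")
  case True
  with assms show ?thesis by (auto intro: reach_own_published)
next
  case False
  with assms have "snap s r u < pcnt s u"
    by (auto intro: reach_awaited_counter_advanced)
  with assms False show ?thesis
    using reach_published_since_snapshot[of maxhp thr s r u n i] by simp
qed

lemma reach_collected_protected:
  assumes "hp_reach maxhp thr s" and "phase s r = Collecting P Q"
    and "n \<in> rlist s r" and "protects s u i n" and "(u, i) \<notin> P"
  shows "n \<in> Q"
  using assms
proof (induction arbitrary: r P Q u i n rule: hp_reach.induct)
  case (init s)
  then show ?case by (simp add: hp_init_def)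
next
  case (step s e s')
  from step.hyps(2) show ?case
  proof cases
    case (wait_done t)
    then show ?thesis
      using step.prems step.IH reach_valid_slot_bound[OF step.hyps(1)]
      by (auto split: if_splits)
  next
    case (collect t P' Q' v j)
    then show ?thesis
      using step.prems step.IH reach_collecting_published[OF step.hyps(1)]
      by (auto split: if_splits)
  qed (use step.prems step.IH reach_not_retired_not_listed[OF step.hyps(1)]
        in \<open>auto simp: in_op_def running_def split: if_splits\<close>)
qed

lemma reach_protected_not_freed:
  assumes "hp_reach maxhp thr s" and "protects s u i n"
  shows "n \<notin> freed s"
  using assms
proof (induction arbitrary: u i n rule: hp_reach.induct)
  case (init s)
  then show ?case by (simp add: hp_init_def)
next
  case (step s e s')
  from step.hyps(2) show ?case
  proof cases
    case (free t Q)
    then show ?thesis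
      using step.prems step.IH reach_collected_protected[OF step.hyps(1)] by auto
  qed (use step.prems step.IH reach_freed_retired[OF step.hyps(1)]
        in \<open>auto simp: in_op_def running_def split: if_splits\<close>)
qed

theorem mainTheorem7:
  fixes maxhp thr :: nat
    and s s' :: "('t::finite, 'n, 'a) hpstate"
  assumes "hp_reach maxhp thr s"
    and "hp_step maxhp thr s (Access t n) s'"
  shows "n \<notin> freed s"
proof -
  from assms(2) obtain i where "protects s t i n"
    by cases auto
  with assms(1) show ?thesis
    by (rule reach_protected_not_freed)
qed

end
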